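(* Let $a=(a_i)_{i\in\mathbb Z}$ be any sequence of complex numbers and $\widehat a$ its dual sequence. Then, with $H(u)=1+\sum_{k\ge1}h_ku^{-k}$ and $E(v)=1+\sum_{k\ge1}e_kv^{-k}$, $$1+(u+v)\sum_{p,q=0}^\infty\frac{s_{(p\mid q);a}}{(u-a_1)\cdots(u-a_{p+1})(v-\widehat a_1)\cdots(v-\widehat a_{q+1})}=H(u)E(v),$$ where $(p\mid q)$ is the hook diagram with Frobenius coordinates $p,q$ (i.e. the partition $(p+1,1^q)$), and both sides are regarded as formal series in $u^{-1},v^{-1}$ with coefficients in $\Lambda$.
   Context: $\Lambda$ is the algebra of symmetric functions over $\mathbb C$ with complete homogeneous $h_k$ and elementary $e_k$. For a sequence $a=(a_i)_{i\in\mathbb Z}$ define $h_{k;a}=\sum_{i=1}^k(-1)^{k-i}e_{k-i}(a_1,\dots,a_{k-1})h_i$ for $k\ge1$, $h_{0;a}=1$, $h_{k;a}=0$ for $k<0$; let $(\tau^ra)_i=a_{i+r}$; and set $s_{\mu;a}=\det[h_{\mu_i-i+j;\,\tau^{1-j}a}]_{i,j=1}^N$ for any $N\ge\ell(\mu)$. The dual sequence is $\widehat a_i=-a_{1-i}$. *)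

theory Defs
  imports "HOL-Library.Poly_Mapping" "HOL-Library.Groups_Big_Fun"
    "HOL-Computational_Algebra.Formal_Laurent_Series"
    "Jordan_Normal_Form.Determinant"
begin

text \<open>Lambda is realised as the polynomial ring C[h_1, h_2, ...] in the
  algebraically independent complete homogeneous symmetric functions
  (variable number k stands for h_k).\<close>

type_synonym sym = "(nat \<Rightarrow>\<^sub>0 nat) \<Rightarrow>\<^sub>0 complex"

definition cst :: "complex \<Rightarrow> sym" where
  "cst c = Poly_Mapping.single 0 c"

definition hh :: "nat \<Rightarrow> sym" where
  "hh k = (if k = 0 then 1 else Poly_Mapping.single (Poly_Mapping.single k 1) 1)"

text \<open>Generating series H(t) = sum h_k t^k, and E(t) = sum e_k t^k defined by
  E(t) H(-t) = 1 (Macdonald (2.6)).\<close>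

definition Hser :: "sym fps" where
  "Hser = Abs_fps hh"

definition Eser :: "sym fps" where
  "Eser = fps_right_inverse (Abs_fps (\<lambda>n. (-1)^n * hh n)) 1"

definition ee :: "nat \<Rightarrow> sym" where
  "ee n = Eser $ n"

definition esym :: "nat \<Rightarrow> nat \<Rightarrow> (int \<Rightarrow> complex) \<Rightarrow> complex" where
  "esym j n a = (\<Sum>S\<in>{S. S \<subseteq> {1..n} \<and> card S = j}. \<Prod>i\<in>S. a (int i))"

definition hfac :: "int \<Rightarrow> (int \<Rightarrow> complex) \<Rightarrow> sym" where
  "hfac k a = (if k < 0 then 0 else if k = 0 then 1 else
     (\<Sum>i=1..nat k. cst ((-1)^(nat k - i) * esym (nat k - i) (nat k - 1) a) * hh i))"

definition tau :: "int \<Rightarrow> (int \<Rightarrow> complex) \<Rightarrow> (int \<Rightarrow> complex)" where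
  "tau r a = (\<lambda>i. a (i + r))"

definition dual :: "(int \<Rightarrow> complex) \<Rightarrow> (int \<Rightarrow> complex)" where
  "dual a = (\<lambda>i. - a (1 - i))"

text \<open>s_{mu;a} for a partition mu given as the list of its (positive) parts,
  using N = length mu (0-based indices i, j correspond to i+1, j+1).\<close>
definition schur_fac :: "nat list \<Rightarrow> (int \<Rightarrow> complex) \<Rightarrow> sym" where
  "schur_fac mu a = det (mat (length mu) (length mu)
     (\<lambda>(i, j). hfac (int (mu ! i) - int i + int j) (tau (- int j) a)))"

definition hook :: "nat \<Rightarrow> nat \<Rightarrow> nat list" where
  "hook p q = Suc p # replicate q 1"

text \<open>Two-variable series: outer variable x = u^{-1}, inner variable y = v^{-1}.
  Power series live in sym fps fps, Laurent series in sym fls fls.\<close>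

text \<open>Expansion of 1/(u - c) = x/(1 - c x) in x = u^{-1}.\<close>
definition inv_lin :: "complex \<Rightarrow> sym fps" where
  "inv_lin c = fps_X * fps_right_inverse (1 - fps_const (cst c) * fps_X) 1"

definition inU :: "sym fps \<Rightarrow> sym fps fps" where
  "inU f = Abs_fps (\<lambda>m. fps_const (f $ m))"

definition inV :: "sym fps \<Rightarrow> sym fps fps" where
  "inV f = fps_const f"

definition emb2 :: "sym fps fps \<Rightarrow> sym fls fls" where
  "emb2 F = fps_to_fls (Abs_fps (\<lambda>m. fps_to_fls (F $ m)))"

definition uvar :: "sym fls fls" where
  "uvar = fls_X_inv"

definition vvar :: "sym fls fls" where
  "vvar = fls_const fls_X_inv"

definition fsum2 :: "(nat \<times> nat \<Rightarrow> sym fps fps) \<Rightarrow> sym fps fps" where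
  "fsum2 T = Abs_fps (\<lambda>m. Abs_fps (\<lambda>n. Sum_any (\<lambda>pq. T pq $ m $ n)))"

definition hook_term :: "(int \<Rightarrow> complex) \<Rightarrow> nat \<times> nat \<Rightarrow> sym fps fps" where
  "hook_term a pq = (case pq of (p, q) \<Rightarrow>
     fps_const (fps_const (schur_fac (hook p q) a))
     * inU (\<Prod>i=1..p+1. inv_lin (a (int i)))
     * inV (\<Prod>j=1..q+1. inv_lin (dual a (int j))))"

end

theory Submission
  imports Defs
begin

text \<open>Put x = 1/u, y = 1/v, a' = dual a and
  W m n = frac_uv a a' m n = 1/((u - a_1)...(u - a_m)(v - a'_1)...(v - a'_n)),
  so that the hook sum is the sum of s_(p|q) W (p+1) (q+1).
  Expanding the hook determinant along its first column and using the shift rule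
  h_k(tau^-1 a) = h_k(a) + (a_(k-1) - a_0) h_(k-1)(a) gives a Pieri-type rule
    s_(p|q+1) + s_(p+1|q) + (a_(p+1) - a_(-q)) s_(p|q) = h_(p+1) s_(0|q),
  while partial fractions give
    (u + v) W (p+1) (q+1) = W p (q+1) + W (p+1) q + (a_(p+1) + a'_(q+1)) W (p+1) (q+1).
  As a'_(q+1) = -a_(-q), multiplying the hook sum by u + v makes it telescope to
  A(u) B(v) - 1 up to boundary terms of arbitrarily high order, where
  A = sum_m h_m W m 0 and B = sum_n s_(0|n-1) W 0 n.
  The series A is the factorial expansion of H. Putting u = -v kills u + v,
  so H(-v) B(v) = 1, i.e. B = E.\<close>

section \<open>Coefficient embeddings as ring homomorphisms\<close>

interpretation cst: comm_ring_hom cst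
  by unfold_locales (simp_all add: cst_def single_add mult_single)

definition fps_map :: "('a \<Rightarrow> 'b) \<Rightarrow> 'a fps \<Rightarrow> 'b fps" where
  "fps_map h f = Abs_fps (\<lambda>n. h (f $ n))"

lemma fps_map_nth [simp]: "fps_map h f $ n = h (f $ n)"
  by (simp add: fps_map_def)

lemma comm_ring_hom_fps_map:
  assumes "comm_ring_hom h"
  shows "comm_ring_hom (fps_map h)"
proof -
  interpret comm_ring_hom h by fact
  show ?thesis
  proof
    show "fps_map h 1 = 1" by (rule fps_ext) (simp add: fps_one_nth)
  qed (auto intro!: fps_ext simp: fps_mult_nth hom_distribs)
qed

interpretation fps_const: comm_ring_hom fps_const
  by unfold_locales (simp_all add: fps_const_add fps_const_mult)

interpretation fps_to_fls: comm_ring_hom fps_to_fls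
  by unfold_locales (simp_all add: fls_times_fps_to_fls)

lemma inU_eq_fps_map: "inU = fps_map fps_const"
  by (simp add: fun_eq_iff inU_def fps_map_def)

interpretation inU: comm_ring_hom inU
  unfolding inU_eq_fps_map by (rule comm_ring_hom_fps_map) unfold_locales

interpretation inV: comm_ring_hom inV
  unfolding inV_def by unfold_locales

lemma emb2_eq: "emb2 F = fps_to_fls (fps_map fps_to_fls F)"
  by (simp add: emb2_def fps_map_def)

interpretation emb2: comm_ring_hom emb2
proof -
  interpret fps_map_fls: comm_ring_hom "fps_map fps_to_fls :: sym fps fps \<Rightarrow> _"
    by (rule comm_ring_hom_fps_map) unfold_locales
  show "comm_ring_hom emb2"
    by unfold_locales (simp_all add: emb2_eq hom_distribs)
qed

section \<open>Factorial complete functions\<close>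

lemma tau_tau: "tau r (tau s b) = tau (r + s) b"
  by (simp add: tau_def fun_eq_iff ac_simps)

lemma tau_0 [simp]: "tau 0 b = b"
  by (simp add: tau_def)

lemma tau_apply: "tau r b i = b (i + r)"
  by (simp add: tau_def)

lemma hfac_neg: "k < 0 \<Longrightarrow> hfac k b = 0"
  by (simp add: hfac_def)

lemma hfac_0 [simp]: "hfac 0 b = 1"
  by (simp add: hfac_def)

lemma hfac_1: "hfac 1 b = hh 1"
proof -
  have "{S. S \<subseteq> {1..0::nat} \<and> card S = 0} = {{}}" by auto
  then show ?thesis by (simp add: hfac_def esym_def)
qed

lemma esym_eq_0: "n < m \<Longrightarrow> esym m n b = 0"
proof -
  assume "n < m"
  have "card S \<noteq> m" if "S \<subseteq> {1..n}" for S
    using card_mono[OF _ that] \<open>n < m\<close> by simp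
  then have no_subsets: "{S. S \<subseteq> {1..n} \<and> card S = m} = {}"
    by auto
  show ?thesis
    unfolding esym_def no_subsets by simp
qed

definition lin :: "complex \<Rightarrow> sym fps" where
  "lin c = 1 - fps_const (cst c) * fps_X"

definition lin_prod :: "nat \<Rightarrow> (int \<Rightarrow> complex) \<Rightarrow> sym fps" where
  "lin_prod n b = (\<Prod>i=1..n. lin (b (int i)))"

lemma lin_prod_Suc: "lin_prod (Suc n) b = lin_prod n b * lin (b (int (Suc n)))"
  by (simp add: lin_prod_def)

lemma lin_mult_nth:
  "(lin c * f) $ n = (if n = 0 then f $ 0 else f $ n - cst c * f $ (n - 1))"
  by (simp add: lin_def algebra_simps)

lemma lin_prod_nth: "lin_prod n b $ m = (-1) ^ m * cst (esym m n b)"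
proof -
  let ?g = "\<lambda>i. fps_const (- cst (b (int i))) * fps_X"
  have prod_g: "prod ?g S = fps_const ((-1) ^ card S * cst (\<Prod>i\<in>S. b (int i))) * fps_X ^ card S"
    if "finite S" for S :: "nat set"
    using that
  proof (induction S rule: finite_induct)
    case (insert x F)
    let ?c = "(-1) ^ card F * cst (\<Prod>i\<in>F. b (int i))"
    have "prod ?g (insert x F) = fps_const (- cst (b (int x))) * fps_const ?c * (fps_X * fps_X ^ card F)"
      using insert by (simp add: mult_ac)
    also have "fps_const (- cst (b (int x))) * fps_const ?c = fps_const (- (cst (b (int x)) * ?c))"
      by (simp only: fps_const_mult mult_minus_left)
    also have "- (cst (b (int x)) * ?c) = (-1) ^ card (insert x F) * cst (\<Prod>i\<in>insert x F. b (int i))"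
      using insert by (simp add: cst.hom_mult)
    finally show ?case
      using insert by simp
  qed simp
  have "lin_prod n b = (\<Prod>i\<in>{1..n}. ?g i + 1)"
    by (simp add: lin_prod_def lin_def fps_const_neg[symmetric] del: fps_const_neg)
  also have "\<dots> = (\<Sum>S\<in>Pow {1..n}. prod ?g S * prod (\<lambda>_. 1) ({1..n} - S))"
    by (rule prod_add) simp
  also have "\<dots> = (\<Sum>S\<in>Pow {1..n}. fps_const ((-1) ^ card S * cst (\<Prod>i\<in>S. b (int i))) * fps_X ^ card S)"
    by (rule sum.cong) (auto intro!: prod_g intro: finite_subset)
  finally have "lin_prod n b $ m
      = (\<Sum>S\<in>Pow {1..n}. if card S = m then (-1) ^ m * cst (\<Prod>i\<in>S. b (int i)) else 0)"
    by (simp add: fps_sum_nth mult.commute[of "fps_const _"] fps_X_power_mult_right_nth cong: if_cong)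
       (rule sum.cong, auto)
  also have "\<dots> = (\<Sum>S\<in>{S \<in> Pow {1..n}. card S = m}. (-1) ^ m * cst (\<Prod>i\<in>S. b (int i)))"
    by (rule sum.inter_filter[symmetric]) simp
  also have "{S \<in> Pow {1..n}. card S = m} = {S. S \<subseteq> {1..n} \<and> card S = m}"
    by auto
  finally show ?thesis
    by (simp add: esym_def cst.hom_sum cst.hom_prod sum_distrib_left)
qed

lemma hfac_eq_lin_prod_mult_Hser_nth:
  assumes "1 \<le> k"
  shows "hfac (int k) b = (lin_prod (k - 1) b * Hser) $ k"
proof -
  have "(lin_prod (k - 1) b * Hser) $ k = (\<Sum>i=0..k. lin_prod (k - 1) b $ (k - i) * hh i)"
    by (simp add: fps_mult_nth Hser_def) (subst sum.atLeastAtMost_rev, rule sum.cong, auto)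
  also have "\<dots> = lin_prod (k - 1) b $ k * hh 0 + (\<Sum>i=1..k. lin_prod (k - 1) b $ (k - i) * hh i)"
    by (subst sum.atLeast_Suc_atMost) simp_all
  also have "lin_prod (k - 1) b $ k = 0"
    using assms by (simp add: lin_prod_nth esym_eq_0)
  also have "(\<Sum>i=1..k. lin_prod (k - 1) b $ (k - i) * hh i)
      = (\<Sum>i=1..k. cst ((-1) ^ (k - i) * esym (k - i) (k - 1) b) * hh i)"
    by (simp add: lin_prod_nth cst.hom_mult cst.hom_power cst.hom_uminus)
  finally show ?thesis
    using assms by (simp add: hfac_def)
qed

lemma lin_prod_tau: "lin_prod (Suc m) (tau (-1) b) = lin (b 0) * lin_prod m b"
proof -
  have "lin_prod (Suc m) (tau (-1) b) = (\<Prod>i=Suc 0..Suc m. lin (b (int i - 1)))"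
    by (simp add: lin_prod_def tau_apply)
  also have "\<dots> = (\<Prod>i=0..m. lin (b (int i)))"
    by (subst prod.shift_bounds_cl_Suc_ivl) simp
  also have "\<dots> = lin (b 0) * (\<Prod>i=Suc 0..m. lin (b (int i)))"
    by (subst prod.atLeast_Suc_atMost) simp_all
  also have "\<dots> = lin (b 0) * lin_prod m b"
    by (simp add: lin_prod_def)
  finally show ?thesis .
qed

lemma hfac_tau_Suc_Suc:
  "hfac (int m + 2) (tau (-1) b)
     = hfac (int m + 2) b + cst (b (int m + 1) - b 0) * hfac (int m + 1) b"
proof -
  let ?k = "Suc (Suc m)"
  have hfac_m2: "hfac (int m + 2) c = (lin_prod (Suc m) c * Hser) $ ?k" for c
    using hfac_eq_lin_prod_mult_Hser_nth[of ?k c] by (simp add: ac_simps)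
  have hfac_m1: "hfac (int m + 1) c = (lin_prod m c * Hser) $ Suc m" for c
    using hfac_eq_lin_prod_mult_Hser_nth[of "Suc m" c] by (simp add: ac_simps)
  have "hfac (int m + 2) (tau (-1) b) - hfac (int m + 2) b
      = ((lin_prod (Suc m) (tau (-1) b) - lin_prod (Suc m) b) * Hser) $ ?k"
    unfolding hfac_m2 by (simp only: fps_sub_nth ring_distribs)
  also have "lin_prod (Suc m) (tau (-1) b) - lin_prod (Suc m) b
      = fps_const (cst (b (int m + 1) - b 0)) * (fps_X * lin_prod m b)"
    unfolding lin_prod_tau lin_prod_Suc[of m b] lin_def
    by (simp add: algebra_simps cst.hom_minus fps_const_sub[symmetric] del: fps_const_sub)
  also have "(fps_const (cst (b (int m + 1) - b 0)) * (fps_X * lin_prod m b) * Hser) $ ?k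
      = cst (b (int m + 1) - b 0) * hfac (int m + 1) b"
    by (simp add: mult.assoc hfac_m1)
  finally show ?thesis by (simp add: algebra_simps)
qed

lemma hfac_tau: "hfac k (tau (-1) b) = hfac k b + cst (b (k - 1) - b 0) * hfac (k - 1) b"
proof (cases "k < 2")
  case True
  then consider "k < 0" | "k = 0" | "k = 1" by linarith
  then show ?thesis
    by cases (simp_all add: hfac_neg hfac_1)
next
  case False
  define m where "m = nat (k - 2)"
  have "k = int m + 2" and "k - 1 = int m + 1"
    using False by (simp_all add: m_def)
  then show ?thesis
    using hfac_tau_Suc_Suc[of m b] by (simp add: ac_simps)
qed

section \<open>Hook Schur functions\<close>

definition hook_mat :: "nat \<Rightarrow> nat \<Rightarrow> (int \<Rightarrow> complex) \<Rightarrow> sym mat" where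
  "hook_mat p q b = mat (Suc q) (Suc q)
     (\<lambda>(i, j). hfac ((if i = 0 then int p + 1 else 1) - int i + int j) (tau (- int j) b))"

definition hook_schur :: "nat \<Rightarrow> nat \<Rightarrow> (int \<Rightarrow> complex) \<Rightarrow> sym" where
  "hook_schur p q b = det (hook_mat p q b)"

lemma schur_fac_hook: "schur_fac (hook p q) b = hook_schur p q b"
proof -
  have "mat (length (hook p q)) (length (hook p q))
     (\<lambda>(i, j). hfac (int (hook p q ! i) - int i + int j) (tau (- int j) b)) = hook_mat p q b"
    by (rule eq_matI) (auto simp: hook_mat_def hook_def nth_Cons' ac_simps)
  then show ?thesis by (simp add: schur_fac_def hook_schur_def)
qed

lemma hook_schur_0: "hook_schur p 0 b = hfac (int p + 1) b"
  by (simp add: hook_schur_def det_single hook_mat_def)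

lemma hook_schur_Suc:
  "hook_schur p (Suc q) b
     = hfac (int p + 1) b * hook_schur 0 q (tau (-1) b) - hook_schur (Suc p) q (tau (-1) b)"
proof -
  let ?A = "hook_mat p (Suc q) b"
  have A: "?A \<in> carrier_mat (Suc (Suc q)) (Suc (Suc q))"
    by (simp add: hook_mat_def)
  have minor0: "mat_delete ?A 0 0 = hook_mat 0 q (tau (-1) b)"
    by (rule eq_matI) (auto simp: hook_mat_def mat_delete_def tau_tau algebra_simps)
  have minor1: "mat_delete ?A (Suc 0) 0 = hook_mat (Suc p) q (tau (-1) b)"
    by (rule eq_matI) (auto simp: hook_mat_def mat_delete_def tau_tau algebra_simps)
  have lower_column: "(\<Sum>i<q. ?A $$ (Suc (Suc i), 0) * cofactor ?A (Suc (Suc i)) 0) = 0"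
    by (rule sum.neutral) (auto simp: hook_mat_def hfac_neg)
  have "det ?A = (\<Sum>i<Suc (Suc q). ?A $$ (i, 0) * cofactor ?A i 0)"
    by (rule laplace_expansion_column[OF A]) simp
  also have "\<dots> = ?A $$ (0, 0) * cofactor ?A 0 0 + ?A $$ (1, 0) * cofactor ?A 1 0"
    by (simp only: sum.lessThan_Suc_shift lower_column) simp
  also have "\<dots> = hfac (int p + 1) b * hook_schur 0 q (tau (-1) b) - hook_schur (Suc p) q (tau (-1) b)"
    by (simp add: cofactor_def minor0 minor1 hook_schur_def) (simp add: hook_mat_def)
  finally show ?thesis by (simp add: hook_schur_def)
qed

lemma hook_schur_pieri:
  "hook_schur p (Suc q) b + hook_schur (Suc p) q b
     + cst (b (int p + 1) - b (- int q)) * hook_schur p q b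
   = hfac (int p + 1) b * hook_schur 0 q b"
proof (induction q arbitrary: p b)
  case 0
  have "hook_schur p 1 b = hfac (int p + 1) b * hh 1 - hfac (int p + 2) (tau (-1) b)"
    using hook_schur_Suc[of p 0 b] by (simp add: hook_schur_0 hfac_1 ac_simps)
  moreover have "hfac (int p + 2) (tau (-1) b)
      = hfac (int p + 2) b + cst (b (int p + 1) - b 0) * hfac (int p + 1) b"
    using hfac_tau[of "int p + 2" b] by (simp add: ac_simps)
  ultimately show ?case
    by (simp add: hook_schur_0 hfac_1 algebra_simps)
next
  case (Suc q)
  let ?c = "tau (-1) b"
  let ?s = "\<lambda>p q. hook_schur p q ?c"
  have c_p: "?c (int p + 2) = b (int p + 1)" and c_q: "?c (- int q) = b (- 1 - int q)"
    and c_1: "?c 1 = b 0"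
    by (simp_all add: tau_apply algebra_simps)
  have IH_p: "?s (Suc p) (Suc q) = hfac (int p + 2) ?c * ?s 0 q - ?s (Suc (Suc p)) q
      - cst (b (int p + 1) - b (- 1 - int q)) * ?s (Suc p) q"
    using Suc[of "Suc p" ?c] by (simp add: c_p c_q algebra_simps)
  have IH_0: "?s 0 (Suc q) = hh 1 * ?s 0 q - ?s 1 q - cst (b 0 - b (- 1 - int q)) * ?s 0 q"
    using Suc[of 0 ?c] by (simp add: c_q c_1 hfac_1 algebra_simps)
  have h_tau: "hfac (int p + 2) ?c = hfac (int p + 2) b + cst (b (int p + 1) - b 0) * hfac (int p + 1) b"
    using hfac_tau[of "int p + 2" b] by (simp add: ac_simps)
  have expand_p: "hook_schur (Suc p) (Suc q) b = hfac (int p + 2) b * ?s 0 q - ?s (Suc (Suc p)) q"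
    using hook_schur_Suc[of "Suc p" q b] by (simp add: ac_simps)
  have expand_0: "hook_schur 0 (Suc q) b = hh 1 * ?s 0 q - ?s 1 q"
    using hook_schur_Suc[of 0 q b] by (simp add: hfac_1)
  have q_Suc: "b (- int (Suc q)) = b (- 1 - int q)" by (simp add: algebra_simps)
  show ?case
    unfolding hook_schur_Suc[of p "Suc q" b] hook_schur_Suc[of p q b] expand_p expand_0
      IH_p IH_0 h_tau q_Suc cst.hom_minus
    by (simp add: algebra_simps)
qed

section \<open>The factorial expansion of H\<close>

definition lin_inverse :: "complex \<Rightarrow> sym fps" where
  "lin_inverse c = fps_right_inverse (1 - fps_const (cst c) * fps_X) 1"

lemma lin_mult_lin_inverse: "lin c * lin_inverse c = 1"
  unfolding lin_def lin_inverse_def by (rule fps_right_inverse) simp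

lemma inv_lin_eq: "inv_lin c = fps_X * lin_inverse c"
  by (simp add: inv_lin_def lin_inverse_def)

lemma lin_mult_inv_lin: "lin c * inv_lin c = fps_X"
  by (simp add: inv_lin_eq mult.left_commute[of _ fps_X] lin_mult_lin_inverse)

definition inv_lin_prod :: "nat \<Rightarrow> (int \<Rightarrow> complex) \<Rightarrow> sym fps" where
  "inv_lin_prod k b = (\<Prod>i=1..k. inv_lin (b (int i)))"

lemma inv_lin_prod_0 [simp]: "inv_lin_prod 0 b = 1"
  by (simp add: inv_lin_prod_def)

lemma inv_lin_prod_Suc: "inv_lin_prod (Suc k) b = inv_lin_prod k b * inv_lin (b (int (Suc k)))"
  by (simp add: inv_lin_prod_def)

lemma lin_prod_mult_inv_lin_prod: "lin_prod k b * inv_lin_prod k b = fps_X ^ k"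
proof (induction k)
  case (Suc k)
  have "lin_prod (Suc k) b * inv_lin_prod (Suc k) b
      = (lin_prod k b * inv_lin_prod k b) * (lin (b (int (Suc k))) * inv_lin (b (int (Suc k))))"
    by (simp add: lin_prod_Suc inv_lin_prod_Suc mult_ac)
  then show ?case
    using Suc by (simp add: lin_mult_inv_lin)
qed (simp add: lin_prod_def)

lemma inv_lin_prod_Suc_recurrence:
  "inv_lin_prod (Suc k) b
     = fps_X * inv_lin_prod k b + fps_const (cst (b (int (Suc k)))) * fps_X * inv_lin_prod (Suc k) b"
proof -
  have "inv_lin_prod k b * fps_X = lin (b (int (Suc k))) * inv_lin_prod (Suc k) b"
    by (simp add: inv_lin_prod_Suc mult.left_commute[of "lin _"] lin_mult_inv_lin)
  then show ?thesis
    by (simp add: lin_def algebra_simps)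
qed

lemma inv_lin_prod_nth_less: "n < k \<Longrightarrow> inv_lin_prod k b $ n = 0"
  by (simp add: inv_lin_prod_def inv_lin_eq prod.distrib fps_X_power_mult_nth)

lemma fps_mult_nth_eq_0_if_low_coeffs_eq_0:
  fixes f g :: "'a :: comm_ring_1 fps"
  assumes "\<forall>i\<le>k. g $ i = 0" and "n \<le> k"
  shows "(f * g) $ n = 0"
  unfolding fps_mult_nth using assms by (intro sum.neutral) auto

lemma lin_prod_mult_inv_lin_prod_nth_high:
  assumes "j \<le> k" and "k < n"
  shows "(lin_prod k b * inv_lin_prod j b) $ n = 0"
  using assms
proof (induction k arbitrary: n)
  case 0
  then show ?case by (simp add: lin_prod_def)
next
  case (Suc k)
  show ?case
  proof (cases "j = Suc k")
    case True
    then show ?thesis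
      using Suc.prems by (simp add: lin_prod_mult_inv_lin_prod)
  next
    case False
    then have "j \<le> k" using Suc.prems by simp
    then have "(lin_prod k b * inv_lin_prod j b) $ n = 0"
      and "(lin_prod k b * inv_lin_prod j b) $ (n - 1) = 0"
      using Suc.IH Suc.prems by auto
    moreover have factor: "lin_prod (Suc k) b * inv_lin_prod j b
        = lin (b (int (Suc k))) * (lin_prod k b * inv_lin_prod j b)"
      by (simp add: lin_prod_Suc mult_ac)
    ultimately show ?thesis
      unfolding factor by (cases n) (simp_all add: lin_mult_nth del: fps_mult_nth_0)
  qed
qed

definition hfac_expansion :: "nat \<Rightarrow> (int \<Rightarrow> complex) \<Rightarrow> sym fps" where
  "hfac_expansion k b = (\<Sum>j\<le>k. fps_const (hfac (int j) b) * inv_lin_prod j b)"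

lemma lin_prod_mult_hfac_expansion_remainder_nth_Suc:
  "(lin_prod k b * (Hser - hfac_expansion k b)) $ Suc k = hfac (int (Suc k)) b"
proof -
  have "lin_prod k b * (Hser - hfac_expansion k b) = lin_prod k b * Hser
      - (\<Sum>j\<le>k. fps_const (hfac (int j) b) * (lin_prod k b * inv_lin_prod j b))"
    by (simp add: hfac_expansion_def algebra_simps sum_distrib_left)
  then have "(lin_prod k b * (Hser - hfac_expansion k b)) $ Suc k = (lin_prod k b * Hser) $ Suc k
      - (\<Sum>j\<le>k. hfac (int j) b * (lin_prod k b * inv_lin_prod j b) $ Suc k)"
    by (simp add: fps_sum_nth)
  then show ?thesis
    using hfac_eq_lin_prod_mult_Hser_nth[of "Suc k" b]
    by (simp add: lin_prod_mult_inv_lin_prod_nth_high)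
qed

lemma lin_prod_mult_hfac_expansion_remainder:
  "\<forall>n\<le>k. (lin_prod k b * (Hser - hfac_expansion k b)) $ n = 0"
proof (induction k)
  case 0
  show ?case by (simp add: hfac_expansion_def lin_prod_def Hser_def hh_def)
next
  case (Suc k)
  let ?R = "lin_prod k b * (Hser - hfac_expansion k b)"
  have "lin_prod (Suc k) b * (Hser - hfac_expansion (Suc k) b)
      = lin_prod (Suc k) b * (Hser - hfac_expansion k b)
        - fps_const (hfac (int (Suc k)) b) * (lin_prod (Suc k) b * inv_lin_prod (Suc k) b)"
    by (simp add: hfac_expansion_def algebra_simps)
  also have "lin_prod (Suc k) b * (Hser - hfac_expansion k b) = lin (b (int (Suc k))) * ?R"
    by (simp add: lin_prod_Suc mult_ac)
  finally have step: "lin_prod (Suc k) b * (Hser - hfac_expansion (Suc k) b)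
      = lin (b (int (Suc k))) * ?R - fps_const (hfac (int (Suc k)) b) * fps_X ^ Suc k"
    by (simp add: lin_prod_mult_inv_lin_prod)
  show ?case
  proof (intro allI impI)
    fix n
    assume "n \<le> Suc k"
    then consider "n = Suc k" | "n \<le> k" by linarith
    then show "(lin_prod (Suc k) b * (Hser - hfac_expansion (Suc k) b)) $ n = 0"
    proof cases
      case 1
      then show ?thesis
        using Suc.IH by (simp add: step lin_mult_nth lin_prod_mult_hfac_expansion_remainder_nth_Suc)
    next
      case 2
      then have "?R $ n = 0" and "?R $ (n - 1) = 0" using Suc.IH by auto
      with 2 show ?thesis
        by (cases n) (simp_all add: step lin_mult_nth del: fps_mult_nth_0)
    qed
  qed
qed

lemma hfac_expansion_nth: "n \<le> k \<Longrightarrow> hfac_expansion k b $ n = hh n"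
proof -
  assume "n \<le> k"
  let ?L = "\<Prod>i=1..k. lin_inverse (b (int i))"
  have "?L * lin_prod k b = 1"
    by (simp add: lin_prod_def prod.distrib[symmetric] mult.commute[of "lin_inverse _"] lin_mult_lin_inverse)
  then have "Hser - hfac_expansion k b = ?L * (lin_prod k b * (Hser - hfac_expansion k b))"
    by (simp add: mult.assoc[symmetric])
  also have "\<dots> $ n = 0"
    using lin_prod_mult_hfac_expansion_remainder \<open>n \<le> k\<close>
    by (intro fps_mult_nth_eq_0_if_low_coeffs_eq_0) auto
  finally show ?thesis by (simp add: Hser_def)
qed

section \<open>Telescoping the hook sum\<close>

lemma sum_lessThan_shift_diff:
  fixes g :: "nat \<Rightarrow> 'a :: ab_group_add"
  shows "(\<Sum>p<M. g p) = g 0 + (\<Sum>p<M. g (Suc p)) - g M"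
proof -
  have "(\<Sum>p<M. g p) + g M = g 0 + (\<Sum>p<M. g (Suc p))"
    using sum.lessThan_Suc_shift[of g M] by simp
  then show ?thesis by (simp add: algebra_simps)
qed

lemma double_sum_shift_inner:
  fixes f :: "nat \<Rightarrow> nat \<Rightarrow> 'a :: ab_group_add"
  shows "(\<Sum>p<M. \<Sum>q<M. f p q)
    = (\<Sum>p<M. f p 0) + (\<Sum>p<M. \<Sum>q<M. f p (Suc q)) - (\<Sum>p<M. f p M)"
proof -
  have "(\<Sum>p<M. \<Sum>q<M. f p q) = (\<Sum>p<M. f p 0 + (\<Sum>q<M. f p (Suc q)) - f p M)"
    by (rule sum.cong[OF refl]) (rule sum_lessThan_shift_diff)
  then show ?thesis
    by (simp add: sum.distrib sum_subtractf)
qed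

lemma double_sum_shift_outer:
  fixes f :: "nat \<Rightarrow> nat \<Rightarrow> 'a :: ab_group_add"
  shows "(\<Sum>p<M. \<Sum>q<M. f p q)
    = (\<Sum>q<M. f 0 q) + (\<Sum>p<M. \<Sum>q<M. f (Suc p) q) - (\<Sum>q<M. f M q)"
proof -
  have "(\<Sum>p<M. \<Sum>q<M. f p q) = (\<Sum>q<M. \<Sum>p<M. f p q)"
    by (rule sum.swap)
  also have "\<dots> = (\<Sum>q<M. f 0 q) + (\<Sum>q<M. \<Sum>p<M. f (Suc p) q) - (\<Sum>q<M. f M q)"
    by (rule double_sum_shift_inner)
  also have "(\<Sum>q<M. \<Sum>p<M. f (Suc p) q) = (\<Sum>p<M. \<Sum>q<M. f (Suc p) q)"
    by (rule sum.swap)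
  finally show ?thesis .
qed

lemma pieri_telescope:
  fixes s c W :: "nat \<Rightarrow> nat \<Rightarrow> 'a :: comm_ring_1" and h e :: "nat \<Rightarrow> 'a"
  assumes pieri: "\<And>p q. s p (Suc q) + s (Suc p) q + c p q * s p q = h (Suc p) * e (Suc q)"
    and h_0: "h 0 = 1" and e_0: "e 0 = 1"
    and h_Suc: "\<And>p. h (Suc p) = s p 0" and e_Suc: "\<And>q. e (Suc q) = s 0 q"
    and W_0: "W 0 0 = 1"
  shows "(\<Sum>p<M. \<Sum>q<M. s p q * (W p (Suc q) + W (Suc p) q + c p q * W (Suc p) (Suc q)))
    = (\<Sum>m\<le>M. \<Sum>n\<le>M. h m * e n * W m n) - 1
      - ((\<Sum>q<M. s M q * W M (Suc q)) + (\<Sum>p<M. s p M * W (Suc p) M))"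
proof -
  let ?A = "\<Sum>p<M. \<Sum>q<M. s (Suc p) q * W (Suc p) (Suc q)"
  let ?B = "\<Sum>p<M. \<Sum>q<M. s p (Suc q) * W (Suc p) (Suc q)"
  let ?C = "\<Sum>p<M. \<Sum>q<M. c p q * s p q * W (Suc p) (Suc q)"
  have left: "(\<Sum>p<M. \<Sum>q<M. s p q * W p (Suc q))
      = (\<Sum>q<M. s 0 q * W 0 (Suc q)) + ?A - (\<Sum>q<M. s M q * W M (Suc q))"
    by (rule double_sum_shift_outer)
  have right: "(\<Sum>p<M. \<Sum>q<M. s p q * W (Suc p) q)
      = (\<Sum>p<M. s p 0 * W (Suc p) 0) + ?B - (\<Sum>p<M. s p M * W (Suc p) M)"
    by (rule double_sum_shift_inner)
  have corner: "(\<Sum>p<M. \<Sum>q<M. h (Suc p) * e (Suc q) * W (Suc p) (Suc q)) = ?A + ?B + ?C"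
    by (simp only: pieri [symmetric] distrib_right sum.distrib) (simp add: algebra_simps)
  have first_row: "(\<Sum>n\<le>M. h 0 * e n * W 0 n) = 1 + (\<Sum>q<M. s 0 q * W 0 (Suc q))"
    by (simp add: sum.atMost_shift h_0 e_0 W_0 e_Suc)
  have later_rows: "(\<Sum>n\<le>M. h (Suc p) * e n * W (Suc p) n)
      = s p 0 * W (Suc p) 0 + (\<Sum>q<M. h (Suc p) * e (Suc q) * W (Suc p) (Suc q))" for p
    by (simp add: sum.atMost_shift e_0 h_Suc [of p])
  have "(\<Sum>m\<le>M. \<Sum>n\<le>M. h m * e n * W m n)
      = 1 + (\<Sum>q<M. s 0 q * W 0 (Suc q)) + (\<Sum>p<M. s p 0 * W (Suc p) 0) + (?A + ?B + ?C)"
    by (simp only: sum.atMost_shift [of "\<lambda>m. \<Sum>n\<le>M. h m * e n * W m n"] first_row later_rows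
        sum.distrib corner add.assoc)
  then show ?thesis
    by (simp add: distrib_left sum.distrib left right algebra_simps)
qed

type_synonym ser2 = "sym fps fps"

definition xvar :: ser2 where
  "xvar = fps_X"

definition yvar :: ser2 where
  "yvar = fps_const fps_X"

lemma inU_X: "inU fps_X = xvar"
  by (rule fps_ext) (simp add: inU_def xvar_def fps_X_def)

lemma inV_X: "inV fps_X = yvar"
  by (simp add: inV_def yvar_def)

lemma inU_const: "inU (fps_const c) = fps_const (fps_const c)"
  by (rule fps_ext) (simp add: inU_def)

lemma inV_const: "inV (fps_const c) = fps_const (fps_const c)"
  by (simp add: inV_def)

lemma inU_mult_inV_nth: "(inU f * inV g) $ i $ j = f $ i * g $ j"
  by (simp add: inU_def inV_def)

definition frac_uv :: "(int \<Rightarrow> complex) \<Rightarrow> (int \<Rightarrow> complex) \<Rightarrow> nat \<Rightarrow> nat \<Rightarrow> ser2" where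
  "frac_uv b b' m n = inU (inv_lin_prod m b) * inV (inv_lin_prod n b')"

lemma xy_sum_mult_frac_uv:
  "(xvar + yvar) * frac_uv b b' (Suc p) (Suc q)
   = xvar * yvar * (frac_uv b b' p (Suc q) + frac_uv b b' (Suc p) q
       + fps_const (fps_const (cst (b (int (Suc p)) + b' (int (Suc q))))) * frac_uv b b' (Suc p) (Suc q))"
proof -
  let ?U = "inU (inv_lin_prod (Suc p) b)" and ?V = "inV (inv_lin_prod (Suc q) b')"
  let ?c = "fps_const (fps_const (cst (b (int (Suc p)))))"
  let ?c' = "fps_const (fps_const (cst (b' (int (Suc q)))))"
  have U: "?U = xvar * inU (inv_lin_prod p b) + ?c * xvar * ?U"
    using arg_cong[OF inv_lin_prod_Suc_recurrence[of p b], of inU]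
    by (simp add: inU.hom_add inU.hom_mult inU_const inU_X)
  have V: "?V = yvar * inV (inv_lin_prod q b') + ?c' * yvar * ?V"
    using arg_cong[OF inv_lin_prod_Suc_recurrence[of q b'], of inV]
    by (simp add: inV.hom_add inV.hom_mult inV_const inV_X)
  have "(xvar + yvar) * frac_uv b b' (Suc p) (Suc q) = xvar * ?U * ?V + yvar * ?U * ?V"
    by (simp add: frac_uv_def algebra_simps)
  also have "xvar * ?U * ?V = xvar * ?U * (yvar * inV (inv_lin_prod q b') + ?c' * yvar * ?V)"
    by (rule arg_cong[OF V])
  also have "yvar * ?U * ?V = yvar * (xvar * inU (inv_lin_prod p b) + ?c * xvar * ?U) * ?V"
    by (rule arg_cong[where f = "\<lambda>z. yvar * z * ?V", OF U])
  finally show ?thesis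
    by (simp add: frac_uv_def algebra_simps cst.hom_add fps_const.hom_add del: fps_const_add)
qed

text \<open>The coefficients of \<open>E(v)\<close> in the basis \<open>W 0 n\<close> (see \<open>efac_expansion_nth\<close>).\<close>

definition efac :: "(int \<Rightarrow> complex) \<Rightarrow> nat \<Rightarrow> sym" where
  "efac b n = (if n = 0 then 1 else hook_schur 0 (n - 1) b)"

definition efac_expansion :: "nat \<Rightarrow> (int \<Rightarrow> complex) \<Rightarrow> sym fps" where
  "efac_expansion k b = (\<Sum>n\<le>k. fps_const (efac b n) * inv_lin_prod n (dual b))"

definition hook_partial_sum :: "(int \<Rightarrow> complex) \<Rightarrow> nat \<Rightarrow> ser2" where
  "hook_partial_sum a M = (\<Sum>p<M. \<Sum>q<M. hook_term a (p, q))"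

definition hook_boundary :: "(int \<Rightarrow> complex) \<Rightarrow> nat \<Rightarrow> ser2" where
  "hook_boundary a M =
     (\<Sum>q<M. fps_const (fps_const (hook_schur M q a)) * frac_uv a (dual a) M (Suc q))
     + (\<Sum>p<M. fps_const (fps_const (hook_schur p M a)) * frac_uv a (dual a) (Suc p) M)"

lemma hook_term_eq:
  "hook_term a (p, q) = fps_const (fps_const (hook_schur p q a)) * frac_uv a (dual a) (Suc p) (Suc q)"
  by (simp add: hook_term_def frac_uv_def schur_fac_hook inv_lin_prod_def mult.assoc)

lemma hook_partial_sum_telescoped:
  "(xvar + yvar) * hook_partial_sum a M
   = xvar * yvar * (inU (hfac_expansion M a) * inV (efac_expansion M a) - 1 - hook_boundary a M)"
proof -
  let ?s = "\<lambda>p q. fps_const (fps_const (hook_schur p q a)) :: ser2"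
  let ?c = "\<lambda>p q. fps_const (fps_const (cst (a (int p + 1) - a (- int q)))) :: ser2"
  let ?W = "frac_uv a (dual a)"
  have "(xvar + yvar) * hook_partial_sum a M
      = (\<Sum>p<M. \<Sum>q<M. ?s p q * ((xvar + yvar) * ?W (Suc p) (Suc q)))"
    by (simp add: hook_partial_sum_def hook_term_eq sum_distrib_left mult_ac)
  also have "\<dots> = xvar * yvar
      * (\<Sum>p<M. \<Sum>q<M. ?s p q * (?W p (Suc q) + ?W (Suc p) q + ?c p q * ?W (Suc p) (Suc q)))"
    by (simp add: xy_sum_mult_frac_uv dual_def sum_distrib_left ac_simps)
  also have "(\<Sum>p<M. \<Sum>q<M. ?s p q * (?W p (Suc q) + ?W (Suc p) q + ?c p q * ?W (Suc p) (Suc q)))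
      = (\<Sum>m\<le>M. \<Sum>n\<le>M. fps_const (fps_const (hfac (int m) a))
           * fps_const (fps_const (efac a n)) * ?W m n) - 1 - hook_boundary a M"
    unfolding hook_boundary_def
  proof (rule pieri_telescope)
    show "?s p (Suc q) + ?s (Suc p) q + ?c p q * ?s p q
        = fps_const (fps_const (hfac (int (Suc p)) a)) * fps_const (fps_const (efac a (Suc q)))"
      for p q
      using arg_cong[OF hook_schur_pieri[of p q a], of "\<lambda>x. fps_const (fps_const x) :: ser2"]
      by (simp add: efac_def ac_simps)
  qed (simp_all add: efac_def hook_schur_0 frac_uv_def ac_simps)
  also have "(\<Sum>m\<le>M. \<Sum>n\<le>M. fps_const (fps_const (hfac (int m) a))
        * fps_const (fps_const (efac a n)) * ?W m n)
      = inU (hfac_expansion M a) * inV (efac_expansion M a)"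
    unfolding hfac_expansion_def efac_expansion_def inU.hom_sum inV.hom_sum sum_product
    by (simp add: inU.hom_mult inV.hom_mult inU_const inV_const frac_uv_def mult_ac)
  finally show ?thesis .
qed

lemma hook_boundary_nth: "i < M \<Longrightarrow> j < M \<Longrightarrow> hook_boundary a M $ i $ j = 0"
  by (simp add: hook_boundary_def fps_sum_nth frac_uv_def inU_mult_inV_nth mult.assoc
      inv_lin_prod_nth_less)

section \<open>Comparing coefficients\<close>

definition agree_below :: "nat \<Rightarrow> ser2 \<Rightarrow> ser2 \<Rightarrow> bool" where
  "agree_below N F G \<longleftrightarrow> (\<forall>i<N. \<forall>j<N. F $ i $ j = G $ i $ j)"

lemma agree_below_refl [simp]: "agree_below N F F"
  by (simp add: agree_below_def)

lemma agree_below_trans: "agree_below N F G \<Longrightarrow> agree_below N G H \<Longrightarrow> agree_below N F H"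
  by (simp add: agree_below_def)

lemma agree_below_mono: "agree_below K F G \<Longrightarrow> N \<le> K \<Longrightarrow> agree_below N F G"
  by (simp add: agree_below_def)

lemma agree_below_diff:
  "agree_below N F F' \<Longrightarrow> agree_below N G G' \<Longrightarrow> agree_below N (F - G) (F' - G')"
  by (simp add: agree_below_def)

lemma ser2_mult_nth:
  "((F :: ser2) * G) $ i $ j = (\<Sum>k=0..i. \<Sum>l=0..j. F $ k $ l * G $ (i - k) $ (j - l))"
  by (simp add: fps_mult_nth fps_sum_nth)

lemma agree_below_mult:
  "agree_below N F F' \<Longrightarrow> agree_below N G G' \<Longrightarrow> agree_below N (F * G) (F' * G')"
  unfolding agree_below_def ser2_mult_nth by (auto intro!: sum.cong)

lemma xy_mult_nth:
  "(xvar * yvar * F) $ i $ j = (if i = 0 \<or> j = 0 then 0 else F $ (i - 1) $ (j - 1))"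
  by (simp add: xvar_def yvar_def mult.assoc)

lemma agree_below_xy_mult:
  "agree_below N F G \<Longrightarrow> agree_below (Suc N) (xvar * yvar * F) (xvar * yvar * G)"
  unfolding agree_below_def xy_mult_nth by (auto simp: less_Suc_eq_0_disj)

lemma ser2_eqI:
  fixes F G :: ser2
  assumes "\<And>N. agree_below N F G"
  shows "F = G"
proof (intro fps_ext)
  fix i j :: nat
  show "F $ i $ j = G $ i $ j"
    using assms[of "Suc (max i j)"] by (simp add: agree_below_def)
qed

lemma hook_partial_sum_agree:
  "agree_below (Suc M) ((xvar + yvar) * hook_partial_sum a M)
     (xvar * yvar * (inU Hser * inV (efac_expansion M a) - 1))"
proof -
  have "agree_below M (inU (hfac_expansion M a)) (inU Hser)"
    by (simp add: agree_below_def inU_def hfac_expansion_nth Hser_def)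
  moreover have "agree_below M (hook_boundary a M) 0"
    by (simp add: agree_below_def hook_boundary_nth)
  ultimately have "agree_below M
      (inU (hfac_expansion M a) * inV (efac_expansion M a) - 1 - hook_boundary a M)
      (inU Hser * inV (efac_expansion M a) - 1 - 0)"
    by (intro agree_below_diff agree_below_mult agree_below_refl)
  then show ?thesis
    unfolding hook_partial_sum_telescoped by (simp add: agree_below_xy_mult)
qed

text \<open>The coefficient of \<open>t\<^sup>N\<close> in \<open>F(-t, t)\<close>, i.e. the substitution \<open>u = -v\<close>;
  it kills every multiple of \<open>x + y\<close>.\<close>

definition antidiag_coeff :: "nat \<Rightarrow> ser2 \<Rightarrow> sym" where
  "antidiag_coeff N F = (\<Sum>m\<le>N. (-1) ^ m * F $ m $ (N - m))"

definition fps_at_neg_X :: "'a :: comm_ring_1 fps \<Rightarrow> 'a fps" where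
  "fps_at_neg_X f = Abs_fps (\<lambda>n. (-1) ^ n * f $ n)"

lemma fps_at_neg_X_one [simp]: "fps_at_neg_X 1 = 1"
  by (rule fps_ext) (simp add: fps_at_neg_X_def)

lemma fps_at_neg_X_Hser_mult_Eser: "fps_at_neg_X Hser * Eser = 1"
proof -
  have "fps_at_neg_X Hser = Abs_fps (\<lambda>n. (-1) ^ n * hh n)"
    by (simp add: fps_at_neg_X_def Hser_def)
  then show ?thesis
    unfolding Eser_def by (simp add: fps_right_inverse hh_def)
qed

lemma antidiag_coeff_cong:
  "agree_below K F G \<Longrightarrow> N < K \<Longrightarrow> antidiag_coeff N F = antidiag_coeff N G"
  unfolding antidiag_coeff_def agree_below_def by (auto intro!: sum.cong)

lemma antidiag_coeff_diff: "antidiag_coeff N (F - G) = antidiag_coeff N F - antidiag_coeff N G"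
  by (simp add: antidiag_coeff_def algebra_simps sum_subtractf)

lemma antidiag_coeff_inU_mult_inV:
  "antidiag_coeff N (inU f * inV g) = (fps_at_neg_X f * g) $ N"
  unfolding antidiag_coeff_def inU_mult_inV_nth
  by (simp add: fps_at_neg_X_def fps_mult_nth atLeast0AtMost mult.assoc)

lemma antidiag_coeff_xy_sum_mult: "antidiag_coeff N ((xvar + yvar) * F) = 0"
proof (cases N)
  case 0
  then show ?thesis by (simp add: antidiag_coeff_def xvar_def yvar_def algebra_simps)
next
  case (Suc n)
  have coeff: "((xvar + yvar) * F) $ m $ j
      = (if m = 0 then 0 else F $ (m - 1) $ j) + (if j = 0 then 0 else F $ m $ (j - 1))" for m j
    by (simp add: xvar_def yvar_def algebra_simps)
  have "antidiag_coeff N ((xvar + yvar) * F)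
      = (\<Sum>m\<le>Suc n. (-1) ^ m * (if m = 0 then 0 else F $ (m - 1) $ (Suc n - m)))
      + (\<Sum>m\<le>Suc n. (-1) ^ m * (if Suc n - m = 0 then 0 else F $ m $ (Suc n - m - 1)))"
    by (simp add: antidiag_coeff_def coeff Suc distrib_left sum.distrib)
  also have "(\<Sum>m\<le>Suc n. (-1) ^ m * (if m = 0 then 0 else F $ (m - 1) $ (Suc n - m)))
      = - (\<Sum>m\<le>n. (-1) ^ m * F $ m $ (n - m))"
    by (subst sum.atMost_Suc_shift) (simp add: sum_negf)
  also have "(\<Sum>m\<le>Suc n. (-1) ^ m * (if Suc n - m = 0 then 0 else F $ m $ (Suc n - m - 1)))
      = (\<Sum>m\<le>n. (-1) ^ m * F $ m $ (n - m))"
    by (subst sum.atMost_Suc) (auto intro!: sum.cong simp: Suc_diff_le)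
  finally show ?thesis by simp
qed

lemma antidiag_coeff_xy_mult:
  "antidiag_coeff (Suc (Suc N)) (xvar * yvar * F) = - antidiag_coeff N F"
proof -
  let ?g = "\<lambda>m. (-1) ^ m * (xvar * yvar * F) $ m $ (Suc (Suc N) - m)"
  have "antidiag_coeff (Suc (Suc N)) (xvar * yvar * F) = ?g 0 + (\<Sum>m\<le>Suc N. ?g (Suc m))"
    unfolding antidiag_coeff_def by (rule sum.atMost_Suc_shift)
  also have "\<dots> = (\<Sum>m\<le>N. ?g (Suc m))"
    by (simp add: xy_mult_nth del: fps_mult_nth_0)
  also have "\<dots> = - antidiag_coeff N F"
    by (simp add: antidiag_coeff_def xy_mult_nth sum_negf Suc_diff_le)
  finally show ?thesis .
qed

lemma efac_expansion_nth:
  assumes "n + 2 \<le> M"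
  shows "efac_expansion M a $ n = Eser $ n"
proof -
  let ?B = "efac_expansion M a"
  let ?D = "fps_at_neg_X Hser * ?B - 1"
  have D_low: "\<forall>k\<le>n. ?D $ k = 0"
  proof (intro allI impI)
    fix k
    assume "k \<le> n"
    have "antidiag_coeff k (inU Hser * inV ?B - inU 1 * inV 1) = ?D $ k"
      by (simp only: antidiag_coeff_diff antidiag_coeff_inU_mult_inV fps_at_neg_X_one
          mult_1_right fps_sub_nth)
    then have "- ?D $ k = antidiag_coeff (Suc (Suc k)) (xvar * yvar * (inU Hser * inV ?B - 1))"
      by (simp add: antidiag_coeff_xy_mult)
    also have "\<dots> = antidiag_coeff (Suc (Suc k)) ((xvar + yvar) * hook_partial_sum a M)"
      using \<open>k \<le> n\<close> assms by (intro antidiag_coeff_cong [OF hook_partial_sum_agree, symmetric]) simp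
    also have "\<dots> = 0"
      by (rule antidiag_coeff_xy_sum_mult)
    finally show "?D $ k = 0" by simp
  qed
  have "?B = Eser * (fps_at_neg_X Hser * ?B)"
    by (simp add: mult.assoc [symmetric] mult.commute [of Eser] fps_at_neg_X_Hser_mult_Eser)
  then have "?B = Eser + Eser * ?D"
    by (simp add: algebra_simps)
  then have "?B $ n = Eser $ n + (Eser * ?D) $ n"
    by (metis fps_add_nth)
  also have "(Eser * ?D) $ n = 0"
    using D_low by (rule fps_mult_nth_eq_0_if_low_coeffs_eq_0) simp
  finally show ?thesis by simp
qed

lemma hook_term_nth_eq_0:
  fixes i j :: nat
  shows "\<not> (p < i \<and> q < j) \<Longrightarrow> hook_term a (p, q) $ i $ j = 0"
  by (auto simp: hook_term_eq frac_uv_def inU_mult_inV_nth mult.assoc inv_lin_prod_nth_less)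

lemma fsum2_hook_term_nth:
  fixes i j :: nat
  assumes "i \<le> M" and "j \<le> M"
  shows "fsum2 (hook_term a) $ i $ j = hook_partial_sum a M $ i $ j"
proof -
  have support: "{pq. hook_term a pq $ i $ j \<noteq> 0} \<subseteq> {..<M} \<times> {..<M}"
  proof
    fix pq
    assume "pq \<in> {pq. hook_term a pq $ i $ j \<noteq> 0}"
    moreover obtain p q where pq: "pq = (p, q)" by force
    ultimately have "p < i" and "q < j"
      using hook_term_nth_eq_0 [of p i q j a] by auto
    then show "pq \<in> {..<M} \<times> {..<M}"
      using assms pq by auto
  qed
  have "fsum2 (hook_term a) $ i $ j = Sum_any (\<lambda>pq. hook_term a pq $ i $ j)"
    by (simp add: fsum2_def)
  also have "\<dots> = (\<Sum>pq\<in>{..<M} \<times> {..<M}. hook_term a pq $ i $ j)"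
    by (rule Sum_any.expand_superset [OF _ support]) simp
  also have "\<dots> = hook_partial_sum a M $ i $ j"
    by (simp add: hook_partial_sum_def fps_sum_nth sum.cartesian_product)
  finally show ?thesis .
qed

lemma hook_sum_identity:
  "(xvar + yvar) * fsum2 (hook_term a) = xvar * yvar * (inU Hser * inV Eser - 1)"
proof (rule ser2_eqI)
  fix N :: nat
  define M where "M = N + 2"
  have "agree_below (Suc M) (fsum2 (hook_term a)) (hook_partial_sum a M)"
    by (simp add: agree_below_def fsum2_hook_term_nth)
  then have "agree_below N ((xvar + yvar) * fsum2 (hook_term a)) ((xvar + yvar) * hook_partial_sum a M)"
    by (rule agree_below_mono [OF agree_below_mult [OF agree_below_refl]]) (simp add: M_def)
  moreover have "agree_below N ((xvar + yvar) * hook_partial_sum a M)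
      (xvar * yvar * (inU Hser * inV (efac_expansion M a) - 1))"
    by (rule agree_below_mono [OF hook_partial_sum_agree]) (simp add: M_def)
  moreover have "agree_below N (xvar * yvar * (inU Hser * inV (efac_expansion M a) - 1))
      (xvar * yvar * (inU Hser * inV Eser - 1))"
    by (intro agree_below_mult agree_below_diff agree_below_refl)
       (simp add: agree_below_def inV_def efac_expansion_nth M_def)
  ultimately show "agree_below N ((xvar + yvar) * fsum2 (hook_term a))
      (xvar * yvar * (inU Hser * inV Eser - 1))"
    by (blast intro: agree_below_trans)
qed

lemma uvar_mult_emb2_xvar: "uvar * emb2 xvar = 1"
proof -
  have "fps_map fps_to_fls xvar = (fps_X :: sym fls fps)"
    by (rule fps_ext) (simp add: xvar_def fps_X_def)
  then show ?thesis
    by (simp add: uvar_def emb2_eq fls_X_inv_times_conv_shift)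
qed

lemma vvar_mult_emb2_yvar: "vvar * emb2 yvar = 1"
proof -
  have "fps_map fps_to_fls yvar = fps_const (fls_X :: sym fls)"
    by (rule fps_ext) (simp add: yvar_def)
  then show ?thesis
    by (simp add: vvar_def emb2_eq fls_X_inv_times_conv_shift)
qed

theorem theorem6:
  fixes a :: "int \<Rightarrow> complex"
  shows "1 + (uvar + vvar) * emb2 (fsum2 (hook_term a))
         = emb2 (inU Hser) * emb2 (inV Eser)"
proof -
  let ?S = "fsum2 (hook_term a)"
  have "uvar * vvar * emb2 (xvar + yvar) = vvar * (uvar * emb2 xvar) + uvar * (vvar * emb2 yvar)"
    by (simp add: emb2.hom_add algebra_simps)
  then have uv: "uvar + vvar = uvar * vvar * emb2 (xvar + yvar)"
    by (simp add: uvar_mult_emb2_xvar vvar_mult_emb2_yvar add.commute)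
  have "(uvar + vvar) * emb2 ?S = uvar * vvar * emb2 ((xvar + yvar) * ?S)"
    by (simp only: uv emb2.hom_mult mult.assoc)
  also have "\<dots> = (uvar * emb2 xvar) * (vvar * emb2 yvar) * emb2 (inU Hser * inV Eser - 1)"
    unfolding hook_sum_identity by (simp add: emb2.hom_mult mult_ac)
  finally show ?thesis
    by (simp add: uvar_mult_emb2_xvar vvar_mult_emb2_yvar emb2.hom_mult emb2.hom_minus)
qed

end
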